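(* Let $n\ge 1$ be an integer, $a>0$, and let $a_0,\dots,a_{n-1}:((-a,a)\setminus\{0\})\times\mathbb{K}\to\mathbb{K}$ be arbitrary functions, where $\mathbb{K}=\mathbb{R}$ or $\mathbb{C}$. Let $f\in C^\infty(-a,a)$ (with values in $\mathbb{K}$) be a solution of $$f^{(n)}(x)+a_{n-1}(x,f(x))f^{(n-1)}(x)+\cdots+a_0(x,f(x))f(x)=0,\qquad x\in(-a,a)\setminus\{0\},$$ satisfying $f(0)=f'(0)=\cdots=f^{(n-1)}(0)=0$. Suppose that $$\limsup_{x\to 0}|x|^{n-k}\,|a_k(x,f(x))|\le \frac1e,\qquad k=0,1,\dots,n-1,$$ where $e$ is Euler's number. Then there exists $\delta>0$ such that $f\equiv 0$ on $[-\delta,\delta]$.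
   Context: The coefficients may be singular at $x=0$; the equation is only required to hold for $x\neq 0$. *)

theory Defs
  imports "HOL-Analysis.Analysis"
begin

fun nderiv :: "nat \<Rightarrow> (real \<Rightarrow> 'a::real_normed_vector) \<Rightarrow> real \<Rightarrow> 'a" where
  "nderiv 0 f = f"
| "nderiv (Suc k) f = (\<lambda>x. vector_derivative (nderiv k f) (at x))"

definition smooth_on :: "real set \<Rightarrow> (real \<Rightarrow> 'a::real_normed_vector) \<Rightarrow> bool" where
  "smooth_on S f \<longleftrightarrow>
     (\<forall>k. \<forall>x\<in>S. (nderiv k f has_vector_derivative nderiv (Suc k) f x) (at x))"

end

theory Submission imports Defs begin

(* Write g k = f^(k).  On a small interval [-rho,rho] the coefficients satisfy
   |x|^(n-k) |a_k(x,f(x))| <= 1/2, because their limsup is at most 1/e < 1/2.  Let M be the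
   maximum of |g n| on [-rho,rho].  Since g k 0 = 0 for k < n, integrating n - k times gives
   |g k x| <= M |x|^(n-k) / (n-k)!.  Inserting this into the equation yields
     |g n x| <= M/2 * sum_{j=1..n} 1/j! <= (1 - 2^-n) M   for x <> 0,
   and by continuity also at x = 0; hence M <= (1 - 2^-n) M, so M = 0 and f = g 0 vanishes. *)

text \<open>If \<open>h 0 = 0\<close> and \<open>|h'(t)| \<le> M t^j/j!\<close> on \<open>[0,x]\<close>, then \<open>|h x| \<le> M x^(j+1)/(j+1)!\<close>:
  the comparison (mean value) principle against the scalar antiderivative.\<close>
lemma antiderivative_bound_right:
  fixes h :: "real \<Rightarrow> 'a::real_normed_vector"
  assumes x: "0 \<le> x"
    and der: "\<forall>t\<in>{0..x}. (h has_vector_derivative h' t) (at t)"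
    and h0: "h 0 = 0"
    and bound: "\<forall>t\<in>{0..x}. norm (h' t) \<le> M * t ^ j / fact j"
  shows "norm (h x) \<le> M * x ^ Suc j / fact (Suc j)"
proof (cases "x = 0")
  case True
  then show ?thesis using h0 by simp
next
  case False
  let ?p = "\<lambda>t::real. M * t ^ Suc j / fact (Suc j)"
  have "norm (h x - h 0) \<le> ?p x - ?p 0"
  proof (rule differentiable_bound_general[where f'=h' and \<phi>'="\<lambda>t. M * t ^ j / fact j"])
    show "0 < x" using x False by simp
    show "continuous_on {0..x} h"
      using der has_vector_derivative_continuous continuous_at_imp_continuous_on by blast
    show "continuous_on {0..x} ?p" by (intro continuous_intros) auto
    fix t assume t: "0 < t" "t < x"
    show "(h has_vector_derivative h' t) (at t)" using t der by auto
    have "(?p has_real_derivative M * (real (Suc j) * t ^ j) / fact (Suc j)) (at t)"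
      by (intro derivative_eq_intros) auto
    moreover have "M * (real (Suc j) * t ^ j) / fact (Suc j) = M * t ^ j / fact j"
      by (simp only: fact_Suc) (simp del: of_nat_Suc)
    ultimately show "(?p has_vector_derivative M * t ^ j / fact j) (at t)"
      by (simp add: has_real_derivative_iff_has_vector_derivative)
    show "norm (h' t) \<le> M * t ^ j / fact j" using bound t by simp
  qed
  then show ?thesis using h0 by simp
qed

text \<open>The two-sided version on \<open>[-\<rho>,\<rho>]\<close>; negative arguments reduce to the right-hand case
  by reflecting \<open>h\<close>.\<close>
lemma antiderivative_bound:
  fixes h :: "real \<Rightarrow> 'a::real_normed_vector"
  assumes der: "\<forall>t\<in>{-\<rho>..\<rho>}. (h has_vector_derivative h' t) (at t)"
    and h0: "h 0 = 0"
    and bound: "\<forall>t\<in>{-\<rho>..\<rho>}. norm (h' t) \<le> M * \<bar>t\<bar> ^ j / fact j"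
    and x: "x \<in> {-\<rho>..\<rho>}"
  shows "norm (h x) \<le> M * \<bar>x\<bar> ^ Suc j / fact (Suc j)"
proof (cases "0 \<le> x")
  case True
  have "norm (h x) \<le> M * x ^ Suc j / fact (Suc j)"
  proof (rule antiderivative_bound_right[where h=h and h'=h'])
    show "\<forall>t\<in>{0..x}. norm (h' t) \<le> M * t ^ j / fact j"
    proof
      fix t assume "t \<in> {0..x}"
      then show "norm (h' t) \<le> M * t ^ j / fact j" using bound x by (auto dest: bspec[of _ _ t])
    qed
  qed (use True der h0 x in auto)
  then show ?thesis using True by simp
next
  case False
  have refl_der: "((\<lambda>s. h (- s)) has_vector_derivative - h' (- t)) (at t)"
    if "t \<in> {0..-x}" for t
  proof -
    have "(uminus has_vector_derivative (-1::real)) (at t)"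
      by (auto intro!: derivative_eq_intros simp: has_real_derivative_iff_has_vector_derivative[symmetric])
    moreover have "(h has_vector_derivative h' (- t)) (at (- t))" using der that x by auto
    ultimately show ?thesis using vector_diff_chain_at by (fastforce simp: o_def)
  qed
  have "norm (h (- (- x))) \<le> M * (- x) ^ Suc j / fact (Suc j)"
  proof (rule antiderivative_bound_right[where h'="\<lambda>t. - h' (- t)"])
    show "\<forall>t\<in>{0..-x}. norm (- h' (- t)) \<le> M * t ^ j / fact j"
    proof
      fix t assume "t \<in> {0..-x}"
      then show "norm (- h' (- t)) \<le> M * t ^ j / fact j" using bound x by (auto dest: bspec[of _ _ "- t"])
    qed
  qed (use False h0 refl_der in auto)
  then show ?thesis using False by simp
qed

lemma iterated_antiderivative_bound:
  fixes g :: "nat \<Rightarrow> real \<Rightarrow> 'a::real_normed_vector"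
  assumes der: "\<forall>k<n. \<forall>t\<in>{-\<rho>..\<rho>}. (g k has_vector_derivative g (Suc k) t) (at t)"
    and zero: "\<forall>k<n. g k 0 = 0"
    and bound: "\<forall>t\<in>{-\<rho>..\<rho>}. norm (g n t) \<le> M"
  shows "j \<le> n \<Longrightarrow> x \<in> {-\<rho>..\<rho>} \<Longrightarrow> norm (g (n - j) x) \<le> M * \<bar>x\<bar> ^ j / fact j"
proof (induction j arbitrary: x)
  case 0
  then show ?case using bound by simp
next
  case (Suc j)
  have idx: "Suc (n - Suc j) = n - j" "n - Suc j < n" using Suc.prems by auto
  show ?case
  proof (rule antiderivative_bound[where h'="g (n - j)"])
    show "\<forall>t\<in>{-\<rho>..\<rho>}. (g (n - Suc j) has_vector_derivative g (n - j) t) (at t)"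
      using der idx by metis
  qed (use zero idx Suc in auto)
qed

lemma pow2_le_fact: "(2::real) ^ m \<le> fact (Suc m)"
proof (induction m)
  case 0 then show ?case by simp
next
  case (Suc m)
  have "(2::real) ^ Suc m = 2 * 2 ^ m" by simp
  also have "\<dots> \<le> 2 * fact (Suc m)" using Suc by simp
  also have "\<dots> \<le> real (Suc (Suc m)) * fact (Suc m)" by (intro mult_right_mono) auto
  also have "\<dots> = fact (Suc (Suc m))" by simp
  finally show ?case .
qed

text \<open>\<open>\<Sum>\<^sub>j\<^sub>=\<^sub>1\<^sup>n 1/j! \<le> 2 - 2/2^n\<close>; the crucial point is that it is strictly less than \<open>2\<close>,
  so coefficients of size \<open>1/2\<close> give a contraction.\<close>
lemma sum_inverse_fact_le:
  assumes "n \<ge> 1"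
  shows "(\<Sum>k<n. 1 / fact (n - k) :: real) \<le> 2 - 2 / 2 ^ n"
proof -
  have "(\<Sum>k<n. 1 / fact (n - k) :: real) \<le> (\<Sum>k<n. 2 ^ k / 2 ^ (n - 1))"
  proof (intro sum_mono)
    fix k assume k: "k \<in> {..<n}"
    have "Suc (n - 1 - k) = n - k" using k by auto
    then have "(2::real) ^ (n - 1 - k) \<le> fact (n - k)" using pow2_le_fact[of "n - 1 - k"] by simp
    moreover have "(2::real) ^ (n - 1) = 2 ^ k * 2 ^ (n - 1 - k)"
      using k by (simp add: power_add[symmetric])
    ultimately show "1 / fact (n - k) \<le> (2::real) ^ k / 2 ^ (n - 1)"
      by (simp add: frac_le)
  qed
  also have "\<dots> = (2 ^ n - 1) / 2 ^ (n - 1)"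
  proof -
    have "(\<Sum>k<n. (2::real) ^ k) = 2 ^ n - 1" by (induction n) auto
    then show ?thesis by (simp add: sum_divide_distrib[symmetric])
  qed
  also have "\<dots> = 2 - 2 / 2 ^ n"
  proof -
    have "(2::real) ^ n = 2 * 2 ^ (n - 1)" using assms by (cases n) auto
    then show ?thesis by (simp add: field_simps)
  qed
  finally show ?thesis .
qed

lemma flat_solution_vanishes:
  fixes g :: "nat \<Rightarrow> real \<Rightarrow> 'a::real_normed_vector" and c :: "nat \<Rightarrow> real \<Rightarrow> real"
  assumes n: "n \<ge> 1" and \<rho>: "\<rho> > 0"
    and der: "\<forall>k<n. \<forall>t\<in>{-\<rho>..\<rho>}. (g k has_vector_derivative g (Suc k) t) (at t)"
    and cont: "continuous_on {-\<rho>..\<rho>} (g n)"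
    and zero: "\<forall>k<n. g k 0 = 0"
    and ineq: "\<forall>x\<in>{-\<rho>..\<rho>} - {0}. norm (g n x) \<le> (\<Sum>k<n. c k x * norm (g k x))"
    and small: "\<forall>x\<in>{-\<rho>..\<rho>} - {0}. \<forall>k<n. 0 \<le> c k x \<and> \<bar>x\<bar> ^ (n - k) * c k x \<le> 1/2"
  shows "\<forall>x\<in>{-\<rho>..\<rho>}. g 0 x = 0"
proof -
  have "continuous_on {-\<rho>..\<rho>} (\<lambda>t. norm (g n t))" using cont by (intro continuous_intros)
  from continuous_attains_sup[OF compact_Icc _ this] \<rho>
  obtain t0 where t0: "t0 \<in> {-\<rho>..\<rho>}" and max: "\<forall>t\<in>{-\<rho>..\<rho>}. norm (g n t) \<le> norm (g n t0)"
    by force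
  define M where "M = norm (g n t0)"
  define \<theta> :: real where "\<theta> = 1 - 1 / 2 ^ n"
  have M0: "M \<ge> 0" by (simp add: M_def)
  have taylor: "norm (g k x) \<le> M * \<bar>x\<bar> ^ (n - k) / fact (n - k)" if "k < n" "x \<in> {-\<rho>..\<rho>}" for k x
    using iterated_antiderivative_bound[OF der zero max, of "n - k" x] that by (simp add: M_def)
  have contraction: "norm (g n x) \<le> \<theta> * M" if x: "x \<in> {-\<rho>..\<rho>} - {0}" for x
  proof -
    have "norm (g n x) \<le> (\<Sum>k<n. c k x * norm (g k x))" using ineq x by blast
    also have "\<dots> \<le> (\<Sum>k<n. M / 2 * (1 / fact (n - k)))"
    proof (intro sum_mono)
      fix k assume k: "k \<in> {..<n}"
      have "c k x * norm (g k x) \<le> c k x * (M * \<bar>x\<bar> ^ (n - k) / fact (n - k))"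
        using taylor[of k x] small x k by (intro mult_left_mono) auto
      also have "\<dots> = (\<bar>x\<bar> ^ (n - k) * c k x) * (M / fact (n - k))" by simp
      also have "\<dots> \<le> 1/2 * (M / fact (n - k))"
        using small x k M0 by (intro mult_right_mono) auto
      finally show "c k x * norm (g k x) \<le> M / 2 * (1 / fact (n - k))" by simp
    qed
    also have "\<dots> = M / 2 * (\<Sum>k<n. 1 / fact (n - k))" by (simp add: sum_distrib_left)
    also have "\<dots> \<le> M / 2 * (2 - 2 / 2 ^ n)"
      using sum_inverse_fact_le[OF n] M0 by (intro mult_left_mono) auto
    also have "\<dots> = \<theta> * M" by (simp add: \<theta>_def field_simps)
    finally show ?thesis .
  qed
  text \<open>By continuity the contraction also holds at \<open>0\<close>, hence at the maximum point.\<close>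
  have contraction0: "norm (g n 0) \<le> \<theta> * M"
  proof (rule tendsto_upperbound)
    have "isCont (g n) 0"
      using cont \<rho> by (simp add: continuous_on_interior)
    then show "((\<lambda>t. norm (g n t)) \<longlongrightarrow> norm (g n 0)) (at 0)"
      by (intro tendsto_norm) (simp add: isCont_def)
    show "eventually (\<lambda>t. norm (g n t) \<le> \<theta> * M) (at (0::real))"
      unfolding eventually_at using \<rho>
      by (intro exI[of _ \<rho>]) (auto intro!: contraction simp: dist_real_def)
  qed simp
  have "M \<le> \<theta> * M" using t0 contraction contraction0 unfolding M_def by (cases "t0 = 0") auto
  moreover have "\<theta> < 1" by (simp add: \<theta>_def)
  ultimately have "M = 0" using M0 by (smt (verit) mult_le_cancel_right1)
  then show ?thesis using taylor[of 0] n by auto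
qed

text \<open>Since \<open>1/e < 1/2\<close>, the limsup hypothesis makes every weighted coefficient
  \<open>|x|^(n-k) |a_k(x,f(x))|\<close> smaller than \<open>1/2\<close> on a punctured neighbourhood of \<open>0\<close>.\<close>
lemma coefficients_eventually_small:
  fixes F :: "nat \<Rightarrow> real \<Rightarrow> real"
  assumes "\<forall>k<n. Limsup (at (0::real)) (\<lambda>x. ereal (F k x)) \<le> ereal (1 / exp 1)"
  shows "\<exists>d>0. \<forall>x. x \<noteq> 0 \<and> \<bar>x\<bar> < d \<longrightarrow> (\<forall>k<n. F k x < 1/2)"
proof -
  have half: "ereal (1 / exp 1) < ereal (1/2)"
    using exp_1_gt_powr[of 1] by (simp add: field_simps)
  have "\<forall>k\<in>{..<n}. eventually (\<lambda>x. F k x < 1/2) (at (0::real))"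
  proof
    fix k assume "k \<in> {..<n}"
    then have "Limsup (at (0::real)) (\<lambda>x. ereal (F k x)) < ereal (1/2)"
      using assms half by (meson lessThan_iff order.strict_trans1)
    from Limsup_lessD[OF this] show "eventually (\<lambda>x. F k x < 1/2) (at (0::real))" by simp
  qed
  then have "eventually (\<lambda>x. \<forall>k\<in>{..<n}. F k x < 1/2) (at (0::real))"
    by (intro eventually_ball_finite) auto
  then show ?thesis unfolding eventually_at by (auto simp: dist_real_def)
qed

lemma norm_bound_from_linear_relation:
  fixes y :: "'a::real_normed_field" and c z :: "nat \<Rightarrow> 'a"
  assumes "y + (\<Sum>k<n. c k * z k) = 0"
  shows "norm y \<le> (\<Sum>k<n. norm (c k) * norm (z k))"
proof -
  have "y = - (\<Sum>k<n. c k * z k)" using assms by (simp add: eq_neg_iff_add_eq_0)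
  then have "norm y = norm (\<Sum>k<n. c k * z k)" by simp
  also have "\<dots> \<le> (\<Sum>k<n. norm (c k * z k))" by (rule norm_sum)
  finally show ?thesis by (simp add: norm_mult)
qed

theorem theorem1:
  fixes n :: nat and a :: real
    and A :: "nat \<Rightarrow> real \<Rightarrow> 'a::real_normed_field \<Rightarrow> 'a"
    and f :: "real \<Rightarrow> 'a"
  assumes "n \<ge> 1" and "a > 0"
    and "smooth_on {-a<..<a} f"
    and "\<forall>x\<in>{-a<..<a} - {0}.
           nderiv n f x + (\<Sum>k<n. A k x (f x) * nderiv k f x) = 0"
    and "\<forall>k<n. nderiv k f 0 = 0"
    and "\<forall>k<n. Limsup (at (0::real)) (\<lambda>x. ereal (\<bar>x\<bar> ^ (n - k) * norm (A k x (f x))))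
                \<le> ereal (1 / exp 1)"
  shows "\<exists>\<delta>>0. \<delta> < a \<and> (\<forall>x\<in>{-\<delta>..\<delta>}. f x = 0)"
proof -
  obtain d where d: "d > 0"
    and small: "\<And>x k. x \<noteq> 0 \<Longrightarrow> \<bar>x\<bar> < d \<Longrightarrow> k < n \<Longrightarrow> \<bar>x\<bar> ^ (n - k) * norm (A k x (f x)) < 1/2"
    using coefficients_eventually_small[OF assms(6)] by blast
  define \<rho> where "\<rho> = min (d/2) (a/2)"
  have \<rho>: "\<rho> > 0" "\<rho> < a" "\<rho> < d" and sub: "{-\<rho>..\<rho>} \<subseteq> {-a<..<a}"
    using d assms(2) by (auto simp: \<rho>_def)
  have der: "\<forall>k. \<forall>t\<in>{-\<rho>..\<rho>}. (nderiv k f has_vector_derivative nderiv (Suc k) f t) (at t)"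
    using assms(3) sub unfolding smooth_on_def by auto
  have "\<forall>x\<in>{-\<rho>..\<rho>}. nderiv 0 f x = 0"
  proof (rule flat_solution_vanishes[where c="\<lambda>k x. norm (A k x (f x))"])
    show "continuous_on {-\<rho>..\<rho>} (nderiv n f)"
      using der has_vector_derivative_continuous continuous_at_imp_continuous_on by blast
    show "\<forall>x\<in>{-\<rho>..\<rho>} - {0}. norm (nderiv n f x) \<le> (\<Sum>k<n. norm (A k x (f x)) * norm (nderiv k f x))"
    proof
      fix x assume "x \<in> {-\<rho>..\<rho>} - {0}"
      then have "x \<in> {-a<..<a} - {0}" using sub by auto
      then show "norm (nderiv n f x) \<le> (\<Sum>k<n. norm (A k x (f x)) * norm (nderiv k f x))"
        using assms(4) by (intro norm_bound_from_linear_relation) blast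
    qed
    show "\<forall>x\<in>{-\<rho>..\<rho>} - {0}. \<forall>k<n. 0 \<le> norm (A k x (f x)) \<and> \<bar>x\<bar> ^ (n - k) * norm (A k x (f x)) \<le> 1/2"
    proof (intro ballI allI impI conjI)
      fix x k assume "x \<in> {-\<rho>..\<rho>} - {0}" "k < n"
      then show "\<bar>x\<bar> ^ (n - k) * norm (A k x (f x)) \<le> 1/2"
        using small[of x k] \<rho>(3) by fastforce
    qed simp
  qed (use assms(1,5) \<rho> der in auto)
  then show ?thesis using \<rho> by auto
qed

end
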